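(* For $s,t\in\mu_r$ and $v,w\in\mathcal{A}_r$: \[ y\diamond_s vz_t^\delta w=(y\diamond_s v)z_t^\delta w+vz_t^\delta(y\diamond_s w)+vz_t^\delta(z_s^\delta-z_t^\delta)w. \]
   Context: Fix $r\ge1$, $\mu_r$ the $r$th roots of unity, $\mathcal{A}_r=\mathbb{Q}\langle x,y_s\mid s\in\mu_r\rangle$ the free noncommutative polynomial algebra over $\mathbb{Q}$, $\mathcal{A}_1=\mathbb{Q}\langle x,y\rangle$ with $y=y_1$. Write $z=x+y_1$, $z_s=x+y_s$, $\delta(1)=0$, $\delta(s)=1$ ($s\ne1$), $z_s^\delta=x+\delta(s)y_s$, $z_{k,s}=x^{k-1}y_s$. Let $\varphi$ be the algebra automorphism of $\mathcal{A}_r$ with $\varphi(x)=z$, $\varphi(y_s)=\delta(s)y_s-y_1$. Every word is uniquely $z_{k_1,s_1}\cdots z_{k_l,s_l}x^a$ ($l,a\ge0$); define linear maps $\mathcal{I}(z_{k_1,s_1}\cdots z_{k_l,s_l}x^a)=z_{k_1,s_1}z_{k_2,s_1s_2}\cdots z_{k_l,s_1\cdots s_l}x^a$ and $M_s(z_{k_1,s_1}\cdots z_{k_l,s_l}x^a)=z_{k_1,ss_1}z_{k_2,s_2}\cdots z_{k_l,s_l}x^a$ (with $M_s(x^a)=x^a$), and $\psi_s=\varphi\circ\mathcal{I}\circ M_s$. Diamond product: for $s\in\mu_r$, $\diamond_s:\mathcal{A}_1\times\mathcal{A}_r\to\mathcal{A}_r$ is the $\mathbb{Q}$-bilinear map defined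 recursively on words by $1\diamond_s w=w$, $v\diamond_s1=\psi_s\varphi(v)$, and for $v\in\mathcal{A}_1$, $w\in\mathcal{A}_r$, $1\ne t\in\mu_r$: $vx\diamond_s wx=(v\diamond_s wx)x-(vy\diamond_s w)x$; $vy\diamond_s wx=(v\diamond_s wx)y+(vy\diamond_s w)x$; $vx\diamond_s wy=(v\diamond_s wy)x+(vx\diamond_s w)y$; $vy\diamond_s wy=(v\diamond_s wy)y-(vx\diamond_s w)y$; $vx\diamond_s wy_t=(v\diamond_s wy_t)x+(v\diamond_s wz_t)y_t-(vy\diamond_s w)y_t$; $vy\diamond_s wy_t=(v\diamond_s wy_t)y-(v\diamond_s wz_t)y_t+(vy\diamond_s w)y_t$. *)

theory Defs
  imports Complex_Main
begin

text \<open>Roots of unity are represented as complex numbers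
  s with s^r = 1. Words are lists of letters (left-to-right), and noncommutative
  polynomials are functions word => rat (finitely supported ones are the elements
  of the algebra; see Ar).\<close>

datatype letter = X | Y complex

type_synonym word = "letter list"
type_synonym poly = "word \<Rightarrow> rat"

definition mono :: "word \<Rightarrow> poly" where
  "mono w = (\<lambda>u. if u = w then 1 else 0)"

definition pone :: poly where "pone = mono []"

definition padd :: "poly \<Rightarrow> poly \<Rightarrow> poly" (infixl "+\<^sub>p" 65) where
  "P +\<^sub>p Q = (\<lambda>u. P u + Q u)"

definition psub :: "poly \<Rightarrow> poly \<Rightarrow> poly" (infixl "-\<^sub>p" 65) where
  "P -\<^sub>p Q = (\<lambda>u. P u - Q u)"

definition psc :: "rat \<Rightarrow> poly \<Rightarrow> poly" where
  "psc c P = (\<lambda>u. c * P u)"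

definition pmul :: "poly \<Rightarrow> poly \<Rightarrow> poly" (infixl "*\<^sub>p" 70) where
  "P *\<^sub>p Q = (\<lambda>u. \<Sum>i\<in>{0..length u}. P (take i u) * Q (drop i u))"

definition supp :: "poly \<Rightarrow> word set" where
  "supp P = {w. P w \<noteq> 0}"

definition lin :: "(word \<Rightarrow> poly) \<Rightarrow> poly \<Rightarrow> poly" where
  "lin f P = (\<lambda>u. \<Sum>w\<in>supp P. P w * f w u)"

definition bilin :: "(word \<Rightarrow> word \<Rightarrow> poly) \<Rightarrow> poly \<Rightarrow> poly \<Rightarrow> poly" where
  "bilin f P Q = (\<lambda>u. \<Sum>v\<in>supp P. \<Sum>w\<in>supp Q. P v * Q w * f v w u)"

definition roots_of_unity :: "nat \<Rightarrow> complex set" where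
  "roots_of_unity r = {s. s ^ r = 1}"

definition Ar :: "nat \<Rightarrow> poly set" where
  "Ar r = {P. finite (supp P) \<and>
     (\<forall>u\<in>supp P. \<forall>l\<in>set u. l = X \<or> (\<exists>a\<in>roots_of_unity r. l = Y a))}"

definition xp :: poly where "xp = mono [X]"
definition yp :: "complex \<Rightarrow> poly" where "yp s = mono [Y s]"
definition ypoly :: poly where "ypoly = yp 1"

definition delta :: "complex \<Rightarrow> rat" where
  "delta s = (if s = 1 then 0 else 1)"

definition zp :: "complex \<Rightarrow> poly" where "zp s = xp +\<^sub>p yp s"
definition zd :: "complex \<Rightarrow> poly" where "zd s = xp +\<^sub>p psc (delta s) (yp s)"

fun phi_letter :: "letter \<Rightarrow> poly" where
  "phi_letter X = zp 1"
| "phi_letter (Y s) = psc (delta s) (yp s) -\<^sub>p yp 1"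

fun phi_word :: "word \<Rightarrow> poly" where
  "phi_word [] = pone"
| "phi_word (a # w) = phi_letter a *\<^sub>p phi_word w"

definition phi :: "poly \<Rightarrow> poly" where "phi = lin phi_word"

fun Iacc :: "complex \<Rightarrow> word \<Rightarrow> word" where
  "Iacc c [] = []"
| "Iacc c (X # w) = X # Iacc c w"
| "Iacc c (Y t # w) = Y (c * t) # Iacc (c * t) w"

definition Iw :: "word \<Rightarrow> word" where "Iw = Iacc 1"

fun Mw :: "complex \<Rightarrow> word \<Rightarrow> word" where
  "Mw s [] = []"
| "Mw s (X # w) = X # Mw s w"
| "Mw s (Y t # w) = Y (s * t) # w"

definition psi :: "complex \<Rightarrow> poly \<Rightarrow> poly" where
  "psi s = lin (\<lambda>w. phi_word (Iw (Mw s w)))"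

definition rmul :: "poly \<Rightarrow> letter \<Rightarrow> poly" where
  "rmul P a = P *\<^sub>p mono [a]"

text \<open>drev s v w computes (rev v) diamond_s (rev w) on words; the lists are reversed
  so that the last letters appear as heads. Letters Y a with a \<noteq> 1 in the
  first argument do not occur in A_1 and are mapped to 0.\<close>
function drev :: "complex \<Rightarrow> word \<Rightarrow> word \<Rightarrow> poly" where
  "drev s [] w = mono (rev w)"
| "drev s (a # v) [] = psi s (phi (mono (rev (a # v))))"
| "drev s (X # v) (X # w) =
     rmul (drev s v (X # w)) X -\<^sub>p rmul (drev s (Y 1 # v) w) X"
| "drev s (Y a # v) (X # w) =
     (if a = 1 then rmul (drev s v (X # w)) (Y 1) +\<^sub>p rmul (drev s (Y 1 # v) w) X
      else (\<lambda>_. 0))"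
| "drev s (X # v) (Y b # w) =
     (if b = 1 then rmul (drev s v (Y 1 # w)) X +\<^sub>p rmul (drev s (X # v) w) (Y 1)
      else rmul (drev s v (Y b # w)) X
           +\<^sub>p rmul (drev s v (X # w) +\<^sub>p drev s v (Y b # w)) (Y b)
           -\<^sub>p rmul (drev s (Y 1 # v) w) (Y b))"
| "drev s (Y a # v) (Y b # w) =
     (if a = 1 then
        (if b = 1 then rmul (drev s v (Y 1 # w)) (Y 1) -\<^sub>p rmul (drev s (X # v) w) (Y 1)
         else rmul (drev s v (Y b # w)) (Y 1)
           -\<^sub>p rmul (drev s v (X # w) +\<^sub>p drev s v (Y b # w)) (Y b)
           +\<^sub>p rmul (drev s (Y 1 # v) w) (Y b))
      else (\<lambda>_. 0))"
  by pat_completeness auto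
termination
  by (relation "measure (\<lambda>(s, v, w). length v + length w)") auto

definition diamond_word :: "complex \<Rightarrow> word \<Rightarrow> word \<Rightarrow> poly" where
  "diamond_word s v w = drev s (rev v) (rev w)"

definition diamond :: "complex \<Rightarrow> poly \<Rightarrow> poly \<Rightarrow> poly" where
  "diamond s = bilin (diamond_word s)"

end

theory Submission
  imports Defs "HOL-Library.Function_Algebras"
begin

text \<open>On words, \<open>y \<diamond>\<^sub>s w = (y \<diamond>\<^sub>s 1) w + D(w)\<close>, where \<open>D\<close> is the derivation of the free
  algebra with \<open>D(x) = x y\<close> and \<open>D(y\<^sub>b) = y\<^sub>b y - x y\<^sub>b - y\<^sub>b y\<^sub>b\<close>. This follows by induction on
  the last letter of \<open>w\<close>; the recursion also involves \<open>x \<diamond>\<^sub>s\<close>, which is eliminated through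
  \<open>x \<diamond>\<^sub>s w + y \<diamond>\<^sub>s w = w z\<close>. By the Leibniz rule,
  \<open>y \<diamond>\<^sub>s v z\<^sub>t\<^sup>\<delta> w = (y \<diamond>\<^sub>s v) z\<^sub>t\<^sup>\<delta> w + v D(z\<^sub>t\<^sup>\<delta>) w + v z\<^sub>t\<^sup>\<delta> (y \<diamond>\<^sub>s w - (y \<diamond>\<^sub>s 1) w)\<close>, and
  \<open>D(z\<^sub>t\<^sup>\<delta>) = z\<^sub>t\<^sup>\<delta> (y \<diamond>\<^sub>t 1)\<close> because \<open>\<delta>(t)\<^sup>2 = \<delta>(t)\<close>, while \<open>y \<diamond>\<^sub>t 1 - y \<diamond>\<^sub>s 1 = z\<^sub>s\<^sup>\<delta> - z\<^sub>t\<^sup>\<delta>\<close>.\<close>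

lemma padd_eq: "P +\<^sub>p Q = P + Q"
  by (simp add: padd_def fun_eq_iff)

lemma psub_eq: "P -\<^sub>p Q = P - Q"
  by (simp add: psub_def fun_eq_iff)

declare plus_fun_apply[simp del] minus_apply[simp del] uminus_apply[simp del]
  zero_fun_apply[simp del]

definition fin :: "poly \<Rightarrow> bool" where "fin P \<longleftrightarrow> finite (supp P)"

lemma supp_mono[simp]: "supp (mono w) = {w}"
  by (auto simp: supp_def mono_def)

lemma fin_0[simp]: "fin 0"
  by (simp add: fin_def supp_def zero_fun_apply)

lemma fin_mono[simp]: "fin (mono w)"
  by (simp add: fin_def)

lemma fin_add[simp]: "fin P \<Longrightarrow> fin Q \<Longrightarrow> fin (P + Q)"
  unfolding fin_def
  by (rule finite_subset[of _ "supp P \<union> supp Q"]) (auto simp: supp_def plus_fun_apply)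

lemma fin_diff[simp]: "fin P \<Longrightarrow> fin Q \<Longrightarrow> fin (P - Q)"
  unfolding fin_def
  by (rule finite_subset[of _ "supp P \<union> supp Q"]) (auto simp: supp_def minus_apply)

lemma fin_psc[simp]: "fin P \<Longrightarrow> fin (psc c P)"
  unfolding fin_def by (rule finite_subset[of _ "supp P"]) (auto simp: supp_def psc_def)

lemma Ar_fin: "P \<in> Ar r \<Longrightarrow> fin P"
  by (simp add: Ar_def fin_def)

lemma fin_induct[consumes 1, case_names zero step]:
  assumes "fin P" "Pr 0" "\<And>Q a c. fin Q \<Longrightarrow> Pr Q \<Longrightarrow> Pr (Q + psc c (mono a))"
  shows "Pr P"
proof -
  have "\<forall>P. supp P \<subseteq> S \<longrightarrow> Pr P" if "finite S" for S
    using that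
  proof (induction S rule: finite_induct)
    case empty
    have "supp P = {} \<Longrightarrow> P = 0" for P :: poly
      by (auto simp: supp_def fun_eq_iff zero_fun_apply)
    with assms(2) show ?case
      by auto
  next
    case (insert a S)
    show ?case
    proof (intro allI impI)
      fix P assume P: "supp P \<subseteq> insert a S"
      define Q where "Q = P(a := 0)"
      have "supp Q \<subseteq> S"
        using P by (auto simp: Q_def supp_def)
      with insert have "fin Q" "Pr Q"
        by (auto simp: fin_def intro: finite_subset)
      then have "Pr (Q + psc (P a) (mono a))"
        using assms(3) by blast
      moreover have "Q + psc (P a) (mono a) = P"
        by (auto simp: Q_def psc_def mono_def fun_eq_iff plus_fun_apply)
      ultimately show "Pr P" by simp
    qed
  qed
  then show ?thesis
    using assms(1) fin_def by blast
qed

lemma psc_0[simp]: "psc 0 P = 0"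
  by (simp add: psc_def fun_eq_iff zero_fun_apply)

lemma psc_1[simp]: "psc 1 P = P"
  by (simp add: psc_def)

lemma psc_add[simp]: "psc c (P + Q) = psc c P + psc c Q"
  by (simp add: psc_def fun_eq_iff algebra_simps plus_fun_apply)

lemma supp_pmul: "supp (P *\<^sub>p Q) \<subseteq> (\<lambda>(a, b). a @ b) ` (supp P \<times> supp Q)"
proof
  fix u assume "u \<in> supp (P *\<^sub>p Q)"
  then have "(\<Sum>i\<in>{0..length u}. P (take i u) * Q (drop i u)) \<noteq> 0"
    by (simp add: supp_def pmul_def)
  then obtain i where "P (take i u) * Q (drop i u) \<noteq> 0"
    by (metis (mono_tags, lifting) sum.neutral)
  then show "u \<in> (\<lambda>(a, b). a @ b) ` (supp P \<times> supp Q)"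
    unfolding supp_def image_iff by (intro bexI[of _ "(take i u, drop i u)"]) auto
qed

lemma fin_pmul[simp]: "fin P \<Longrightarrow> fin Q \<Longrightarrow> fin (P *\<^sub>p Q)"
  unfolding fin_def by (rule finite_subset[OF supp_pmul]) auto

lemma pmul_add_left[simp]: "(P + Q) *\<^sub>p R = P *\<^sub>p R + Q *\<^sub>p R"
  by (simp add: pmul_def fun_eq_iff algebra_simps sum.distrib plus_fun_apply)

lemma pmul_add_right[simp]: "R *\<^sub>p (P + Q) = R *\<^sub>p P + R *\<^sub>p Q"
  by (simp add: pmul_def fun_eq_iff algebra_simps sum.distrib plus_fun_apply)

lemma pmul_diff_left[simp]: "(P - Q) *\<^sub>p R = P *\<^sub>p R - Q *\<^sub>p R"
  by (simp add: pmul_def fun_eq_iff algebra_simps sum_subtractf minus_apply)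

lemma pmul_diff_right[simp]: "R *\<^sub>p (P - Q) = R *\<^sub>p P - R *\<^sub>p Q"
  by (simp add: pmul_def fun_eq_iff algebra_simps sum_subtractf minus_apply)

lemma pmul_psc_left[simp]: "psc c P *\<^sub>p R = psc c (P *\<^sub>p R)"
  by (simp add: pmul_def psc_def fun_eq_iff sum_distrib_left mult.assoc)

lemma pmul_psc_right[simp]: "R *\<^sub>p psc c P = psc c (R *\<^sub>p P)"
  by (simp add: pmul_def psc_def fun_eq_iff sum_distrib_left algebra_simps)

lemma pmul_uminus_left[simp]: "(- P) *\<^sub>p R = - (P *\<^sub>p R)"
  by (simp add: pmul_def fun_eq_iff sum_negf uminus_apply)

lemma pmul_0_left[simp]: "0 *\<^sub>p R = 0"
  by (simp add: pmul_def fun_eq_iff zero_fun_apply)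

lemma pmul_0_right[simp]: "R *\<^sub>p 0 = 0"
  by (simp add: pmul_def fun_eq_iff zero_fun_apply)

lemma pmul_mono[simp]: "mono a *\<^sub>p mono b = mono (a @ b)"
proof
  fix u
  have split_iff: "take i u = a \<and> drop i u = b \<longleftrightarrow> u = a @ b \<and> i = length a"
    if "i \<le> length u" for i
    using that by (metis append_eq_conv_conj append_take_drop_id length_take min.absorb2)
  have "(mono a *\<^sub>p mono b) u = (\<Sum>i\<in>{0..length u}. if u = a @ b \<and> i = length a then 1 else 0)"
    unfolding pmul_def mono_def by (intro sum.cong refl) (auto simp: split_iff)
  then show "(mono a *\<^sub>p mono b) u = mono (a @ b) u"
    by (simp add: mono_def)
qed

lemma pmul_assoc:
  assumes "fin P" "fin Q" "fin R"
  shows "P *\<^sub>p Q *\<^sub>p R = P *\<^sub>p (Q *\<^sub>p R)"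
  using assms(1)
proof (induction rule: fin_induct)
  case (step P' a c)
  have "mono a *\<^sub>p Q *\<^sub>p R = mono a *\<^sub>p (Q *\<^sub>p R)"
    using assms(2)
  proof (induction rule: fin_induct)
    case (step Q' b d)
    have "mono a *\<^sub>p mono b *\<^sub>p R = mono a *\<^sub>p (mono b *\<^sub>p R)"
      using assms(3) by (induction rule: fin_induct) simp_all
    with step show ?case by simp
  qed simp
  with step show ?case by simp
qed simp

lemma pmul_mono_Nil_left[simp]: "fin P \<Longrightarrow> mono [] *\<^sub>p P = P"
  by (induction rule: fin_induct) simp_all

lemma pmul_mono_Nil_right[simp]: "fin P \<Longrightarrow> P *\<^sub>p mono [] = P"
  by (induction rule: fin_induct) simp_all

lemma lin_expand:
  assumes "finite S" "supp P \<subseteq> S"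
  shows "lin f P = (\<lambda>u. \<Sum>w\<in>S. P w * f w u)"
  unfolding lin_def
  by (intro ext sum.mono_neutral_left[OF assms]) (auto simp: supp_def)

lemma lin_add[simp]:
  assumes "fin P" "fin Q"
  shows "lin f (P + Q) = lin f P + lin f Q"
proof -
  let ?S = "supp P \<union> supp Q"
  have "finite ?S"
    using assms by (simp add: fin_def)
  moreover have "supp (P + Q) \<subseteq> ?S"
    by (auto simp: supp_def plus_fun_apply)
  ultimately show ?thesis
    by (simp add: lin_expand[of ?S] fun_eq_iff algebra_simps sum.distrib plus_fun_apply)
qed

lemma lin_psc[simp]:
  assumes "fin P"
  shows "lin f (psc c P) = psc c (lin f P)"
proof -
  have "finite (supp P)"
    using assms by (simp add: fin_def)
  moreover have "supp (psc c P) \<subseteq> supp P"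
    by (auto simp: supp_def psc_def)
  ultimately show ?thesis
    by (simp add: lin_expand[of "supp P"] fun_eq_iff psc_def sum_distrib_left mult.assoc)
qed

lemma lin_mono[simp]: "lin f (mono a) = f a"
  by (simp add: lin_def fun_eq_iff) (simp add: mono_def)

lemma lin_0[simp]: "lin f 0 = 0"
  by (simp add: lin_def fun_eq_iff supp_def zero_fun_apply)

lemma lin_add_fun: "lin (\<lambda>w. f w + g w) P = lin f P + lin g P"
  by (simp add: lin_def fun_eq_iff sum.distrib algebra_simps plus_fun_apply)

lemma lin_pmul_mono: "fin P \<Longrightarrow> lin (\<lambda>w. C *\<^sub>p mono w) P = C *\<^sub>p P"
  by (induction rule: fin_induct) simp_all

lemma lin_diff[simp]:
  assumes "fin P" "fin Q"
  shows "lin f (P - Q) = lin f P - lin f Q"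
proof -
  have "P - Q = P + psc (-1) Q"
    by (simp add: fun_eq_iff psc_def plus_fun_apply minus_apply)
  then have "lin f (P - Q) = lin f (P + psc (-1) Q)"
    by (rule arg_cong)
  also have "\<dots> = lin f P + psc (-1) (lin f Q)"
    using assms by simp
  finally show ?thesis
    by (simp add: fun_eq_iff psc_def plus_fun_apply minus_apply)
qed

lemma lin_uminus[simp]: "fin P \<Longrightarrow> lin f (- P) = - lin f P"
  using lin_diff[of 0 P f] by simp

lemma delta_1[simp]: "delta 1 = 0"
  by (simp add: delta_def)

text \<open>This is \<open>y \<diamond>\<^sub>s 1 = \<psi>\<^sub>s \<phi>(y)\<close>.\<close>
definition y_diamond_one :: "complex \<Rightarrow> poly" where
  "y_diamond_one s = mono [Y 1] - psc (delta s) (mono [Y s])"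

fun yder_letter :: "letter \<Rightarrow> poly" where
  "yder_letter X = mono [X, Y 1]"
| "yder_letter (Y b) = mono [Y b, Y 1] - mono [X, Y b] - mono [Y b, Y b]"

fun yder :: "word \<Rightarrow> poly" where
  "yder [] = 0"
| "yder (a # w) = yder_letter a *\<^sub>p mono w + mono [a] *\<^sub>p yder w"

lemma fin_yder_letter[simp]: "fin (yder_letter a)"
  by (cases a) simp_all

lemma fin_yder[simp]: "fin (yder w)"
  by (induction w) simp_all

lemma pmul_mono_assoc[simp]: "fin P \<Longrightarrow> mono a *\<^sub>p (mono b *\<^sub>p P) = mono (a @ b) *\<^sub>p P"
  by (simp flip: pmul_assoc)

lemma yder_append: "yder (u @ v) = yder u *\<^sub>p mono v + mono u *\<^sub>p yder v"
  by (induction u) (simp_all add: pmul_assoc algebra_simps)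

lemma yder_snoc: "yder (w @ [a]) = yder w *\<^sub>p mono [a] + mono w *\<^sub>p yder_letter a"
  by (simp add: yder_append)

lemma drev_Y1_Nil: "drev s [Y 1] [] = y_diamond_one s"
  by (simp add: phi_def psi_def y_diamond_one_def Iw_def pone_def yp_def psub_eq)

lemma drev_X_Nil: "drev s [X] [] = zd s"
  by (simp add: phi_def psi_def zd_def Iw_def pone_def yp_def xp_def zp_def psub_eq padd_eq)

lemma fin_zd[simp]: "fin (zd t)"
  by (simp add: zd_def xp_def yp_def padd_eq)

lemma fin_y_diamond_one[simp]: "fin (y_diamond_one s)"
  by (simp add: y_diamond_one_def)

lemma drev_Y1_plus_drev_X:
  "drev s [Y 1] r + drev s [X] r = mono (rev r) *\<^sub>p (mono [X] + mono [Y 1])"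
proof (cases r)
  case Nil
  then show ?thesis
    by (simp only: drev_Y1_Nil drev_X_Nil rev.simps)
      (simp add: y_diamond_one_def zd_def xp_def yp_def padd_eq)
next
  case (Cons a r')
  then show ?thesis
    by (cases a) (auto simp: rmul_def padd_eq psub_eq algebra_simps)
qed

lemma drev_Y1: "drev s [Y 1] r = y_diamond_one s *\<^sub>p mono (rev r) + yder (rev r)"
proof (induction r)
  case Nil
  then show ?case
    by (simp only: drev_Y1_Nil rev.simps yder.simps) simp
next
  case (Cons a r)
  show ?case
  proof (cases a)
    case X
    with Cons show ?thesis
      by (simp add: yder_snoc rmul_def padd_eq psub_eq pmul_assoc algebra_simps)
  next
    case (Y b)
    have drev_X: "drev s [X] r =
        mono (rev r) *\<^sub>p (mono [X] + mono [Y 1]) - (y_diamond_one s *\<^sub>p mono (rev r) + yder (rev r))"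
      using drev_Y1_plus_drev_X[of s r] Cons.IH by (simp add: algebra_simps)
    show ?thesis
      by (simp add: Y Cons.IH drev_X yder_snoc rmul_def padd_eq psub_eq pmul_assoc algebra_simps)
  qed
qed

lemma diamond_ypoly:
  assumes "fin P"
  shows "diamond s ypoly P = y_diamond_one s *\<^sub>p P + lin yder P"
proof -
  have "diamond s ypoly P = lin (\<lambda>w. drev s [Y 1] (rev w)) P"
    by (simp add: diamond_def bilin_def ypoly_def yp_def lin_def diamond_word_def fun_eq_iff)
      (simp add: mono_def)
  also have "\<dots> = lin (\<lambda>w. y_diamond_one s *\<^sub>p mono w + yder w) P"
    by (simp add: drev_Y1)
  finally show ?thesis
    using assms by (simp add: lin_add_fun lin_pmul_mono)
qed

lemma lin_yder_pmul:
  assumes "fin P" "fin Q"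
  shows "lin yder (P *\<^sub>p Q) = lin yder P *\<^sub>p Q + P *\<^sub>p lin yder Q"
  using assms(1)
proof (induction rule: fin_induct)
  case (step P' a c)
  have "lin yder (mono a *\<^sub>p Q) = yder a *\<^sub>p Q + mono a *\<^sub>p lin yder Q"
    using assms(2) by (induction rule: fin_induct) (simp_all add: yder_append algebra_simps)
  with step assms(2) show ?case
    by (simp add: algebra_simps)
qed simp

lemma lin_yder_zd: "lin yder (zd t) = zd t *\<^sub>p y_diamond_one t"
  by (cases "t = 1") (simp_all add: zd_def xp_def yp_def padd_eq delta_def y_diamond_one_def algebra_simps)

lemma y_diamond_one_diff: "y_diamond_one t - y_diamond_one s = zd s - zd t"
  by (simp add: y_diamond_one_def zd_def xp_def yp_def padd_eq algebra_simps)

theorem mainTheorem11: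
  fixes r :: nat and s t :: complex and v w :: poly
  assumes "r \<ge> 1"
    and "s \<in> roots_of_unity r" and "t \<in> roots_of_unity r"
    and "v \<in> Ar r" and "w \<in> Ar r"
  shows "diamond s ypoly (v *\<^sub>p zd t *\<^sub>p w) =
           diamond s ypoly v *\<^sub>p zd t *\<^sub>p w
           +\<^sub>p v *\<^sub>p zd t *\<^sub>p diamond s ypoly w
           +\<^sub>p v *\<^sub>p zd t *\<^sub>p (zd s -\<^sub>p zd t) *\<^sub>p w"
proof -
  \<comment> \<open>The identity holds for arbitrary indices \<open>s\<close>, \<open>t\<close>: only finiteness of \<open>v\<close>, \<open>w\<close> is used.\<close>
  have v: "fin v" and w: "fin w"
    using assms(4,5) by (simp_all add: Ar_fin)
  have "lin yder (v *\<^sub>p zd t *\<^sub>p w) =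
      lin yder v *\<^sub>p zd t *\<^sub>p w + v *\<^sub>p (zd t *\<^sub>p y_diamond_one t) *\<^sub>p w + v *\<^sub>p zd t *\<^sub>p lin yder w"
    using v w by (simp add: lin_yder_pmul lin_yder_zd)
  moreover have "y_diamond_one t = y_diamond_one s + (zd s - zd t)"
    using y_diamond_one_diff[of t s] by (simp add: algebra_simps)
  ultimately show ?thesis
    using v w by (simp add: diamond_ypoly padd_eq psub_eq pmul_assoc algebra_simps)
qed

end
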